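(* Let $\mathbf{C}$ be a category of $\mathbf{FI}$ type and $P$ a character polynomial of degree $\leq c$. Then the expectation $\mathbb{E}_{G_d}[P]:=\frac{1}{|G_d|}\sum_{\sigma\in G_d}P(\sigma)$ does not depend on $d$ for all objects $d\geq c$. Furthermore, if $P$ is the character of a free $\mathbf{C}$-module, then $\mathbb{E}_{G_d}[P]$ is a non-negative integer for every $d$ and is monotonically non-decreasing in $d$ (i.e. $\mathbb{E}_{G_d}[P]\leq\mathbb{E}_{G_e}[P]$ whenever $d\leq e$).
   Context: A category $\mathbf{C}$ is of $\mathbf{FI}$ type if: (1) all Hom-sets are finite; (2) every morphism is a monomorphism and every endomorphism is an isomorphism; (3) for all objects $c,d$ the group $G_d=\mathrm{Aut}_{\mathbf{C}}(d)$ acts transitively on $\mathrm{Hom}_{\mathbf{C}}(c,d)$; (4) for every $d$ only finitely many isomorphism classes of $c$ have $\mathrm{Hom}(c,d)\neq\emptyset$; (5) every pair $c_1\to d\leftarrow c_2$ has a pullback, and every pair $f_i:p\to c_i$ has a weak push-out, i.e. a commutative pullback square $g_i:c_i\to d$ such that for every other pullback square $h_i:c_i\to z$ with $h_1f_1=h_2f_2$ there is a unique $h:d\to z$ with $hg_i=h_i$. Write $c\leq d$ (or $d\geq c$) if $\mathrm{Hom}(c,d)\neq\emptyset$. Binomial set: $\binom{d}{c}=\mathrm{Hom}(c,d)/G_c$. For a conjugacy class $\mu\subseteq G_c$ (write $|\mu|=c$), $\binom{X}{\mu}$ is the class function on every $G_d$ given by $\sigma\mapsto\#\{[f]\in\binom{d}{c}:\exists\psi\in\mu,\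 \sigma f=f\psi\}$. A character polynomial is a $\mathbb{C}$-linear combination of these; it has degree $\leq d$ if each $\binom{X}{\mu}$ appearing nontrivially has $|\mu|\leq d$. For a finite-dimensional $G_c$-representation $V$, $\mathrm{Ind}_c(V)$ is the $\mathbf{C}$-module $d\mapsto\mathbb{C}[\mathrm{Hom}(c,d)]\otimes_{\mathbb{C}[G_c]}V$; a free $\mathbf{C}$-module is a finite direct sum of these, and its character assigns to each $G_d$ the character of its value at $d$. *)

theory Defs
  imports Complex_Main "Jordan_Normal_Form.Matrix"
begin

record ('o, 'm) cat =
  Obj  :: "'o set"
  Mor  :: "'m set"
  Dom  :: "'m \<Rightarrow> 'o"
  Cod  :: "'m \<Rightarrow> 'o"
  Idm  :: "'o \<Rightarrow> 'm"
  Comp :: "'m \<Rightarrow> 'm \<Rightarrow> 'm"   (* Comp C g f = g \<circ> f *)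

definition Hom :: "('o, 'm) cat \<Rightarrow> 'o \<Rightarrow> 'o \<Rightarrow> 'm set" where
  "Hom C c d = {f \<in> Mor C. Dom C f = c \<and> Cod C f = d}"

definition is_category :: "('o, 'm) cat \<Rightarrow> bool" where
  "is_category C \<longleftrightarrow>
     (\<forall>f \<in> Mor C. Dom C f \<in> Obj C \<and> Cod C f \<in> Obj C) \<and>
     (\<forall>c \<in> Obj C. Idm C c \<in> Hom C c c) \<and>
     (\<forall>f \<in> Mor C. \<forall>g \<in> Mor C. Cod C f = Dom C g \<longrightarrow>
         Comp C g f \<in> Hom C (Dom C f) (Cod C g)) \<and>
     (\<forall>f \<in> Mor C. Comp C f (Idm C (Dom C f)) = f \<and> Comp C (Idm C (Cod C f)) f = f) \<and>
     (\<forall>f \<in> Mor C. \<forall>g \<in> Mor C. \<forall>h \<in> Mor C. Cod C f = Dom C g \<longrightarrow> Cod C g = Dom C h \<longrightarrow>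
         Comp C h (Comp C g f) = Comp C (Comp C h g) f)"

definition Aut :: "('o, 'm) cat \<Rightarrow> 'o \<Rightarrow> 'm set" where
  "Aut C d = {f \<in> Hom C d d. \<exists>g \<in> Hom C d d. Comp C g f = Idm C d \<and> Comp C f g = Idm C d}"

definition iso_obj :: "('o, 'm) cat \<Rightarrow> 'o \<Rightarrow> 'o \<Rightarrow> bool" where
  "iso_obj C c d \<longleftrightarrow> (\<exists>f \<in> Hom C c d. \<exists>g \<in> Hom C d c.
      Comp C g f = Idm C c \<and> Comp C f g = Idm C d)"

definition obj_le :: "('o, 'm) cat \<Rightarrow> 'o \<Rightarrow> 'o \<Rightarrow> bool" where
  "obj_le C c d \<longleftrightarrow> Hom C c d \<noteq> {}"

definition is_pullback :: "('o, 'm) cat \<Rightarrow> 'o \<Rightarrow> 'm \<Rightarrow> 'm \<Rightarrow> 'm \<Rightarrow> 'm \<Rightarrow> bool" where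
  "is_pullback C p f1 f2 g1 g2 \<longleftrightarrow>
     f1 \<in> Hom C p (Dom C g1) \<and> f2 \<in> Hom C p (Dom C g2) \<and>
     g1 \<in> Mor C \<and> g2 \<in> Mor C \<and> Cod C g1 = Cod C g2 \<and>
     Comp C g1 f1 = Comp C g2 f2 \<and>
     (\<forall>q \<in> Obj C. \<forall>h1 \<in> Hom C q (Dom C g1). \<forall>h2 \<in> Hom C q (Dom C g2).
        Comp C g1 h1 = Comp C g2 h2 \<longrightarrow>
        (\<exists>!h. h \<in> Hom C q p \<and> Comp C f1 h = h1 \<and> Comp C f2 h = h2))"

definition FI_type :: "('o, 'm) cat \<Rightarrow> bool" where
  "FI_type C \<longleftrightarrow> is_category C \<and>
     \<comment> \<open>(1) finite Hom-sets\<close>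
     (\<forall>c \<in> Obj C. \<forall>d \<in> Obj C. finite (Hom C c d)) \<and>
     \<comment> \<open>(2) every morphism is mono, every endomorphism is an iso\<close>
     (\<forall>f \<in> Mor C. \<forall>g \<in> Mor C. \<forall>h \<in> Mor C.
        Cod C g = Dom C f \<longrightarrow> Dom C h = Dom C g \<longrightarrow> Cod C h = Dom C f \<longrightarrow>
        Comp C f g = Comp C f h \<longrightarrow> g = h) \<and>
     (\<forall>d \<in> Obj C. Hom C d d = Aut C d) \<and>
     \<comment> \<open>(3) \<open>G_d\<close> acts transitively on \<open>Hom(c,d)\<close>\<close>
     (\<forall>c \<in> Obj C. \<forall>d \<in> Obj C. \<forall>f \<in> Hom C c d. \<forall>g \<in> Hom C c d.
        \<exists>\<sigma> \<in> Aut C d. Comp C \<sigma> f = g) \<and>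
     \<comment> \<open>(4) finitely many isomorphism classes below each object\<close>
     (\<forall>d \<in> Obj C. \<exists>S. finite S \<and> S \<subseteq> Obj C \<and>
        (\<forall>c \<in> Obj C. Hom C c d \<noteq> {} \<longrightarrow> (\<exists>s \<in> S. iso_obj C s c))) \<and>
     \<comment> \<open>(5a) pullbacks\<close>
     (\<forall>g1 \<in> Mor C. \<forall>g2 \<in> Mor C. Cod C g1 = Cod C g2 \<longrightarrow>
        (\<exists>p f1 f2. p \<in> Obj C \<and> is_pullback C p f1 f2 g1 g2)) \<and>
     \<comment> \<open>(5b) weak push-outs\<close>
     (\<forall>f1 \<in> Mor C. \<forall>f2 \<in> Mor C. Dom C f1 = Dom C f2 \<longrightarrow>
        (\<exists>g1 g2. Dom C g1 = Cod C f1 \<and> Dom C g2 = Cod C f2 \<and>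
           is_pullback C (Dom C f1) f1 f2 g1 g2 \<and>
           (\<forall>h1 h2. Dom C h1 = Cod C f1 \<and> Dom C h2 = Cod C f2 \<and>
                is_pullback C (Dom C f1) f1 f2 h1 h2 \<longrightarrow>
              (\<exists>!h. h \<in> Hom C (Cod C g1) (Cod C h1) \<and>
                    Comp C h g1 = h1 \<and> Comp C h g2 = h2))))"

text \<open>\<open>binom d c = Hom(c,d)/G_c\<close>: the orbits of the right action of \<open>G_c\<close>.\<close>
definition binom :: "('o, 'm) cat \<Rightarrow> 'o \<Rightarrow> 'o \<Rightarrow> 'm set set" where
  "binom C d c = (\<lambda>f. {Comp C f \<psi> | \<psi>. \<psi> \<in> Aut C c}) ` Hom C c d"

definition is_conj_class :: "('o, 'm) cat \<Rightarrow> 'o \<Rightarrow> 'm set \<Rightarrow> bool" where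
  "is_conj_class C c \<mu> \<longleftrightarrow> c \<in> Obj C \<and>
     (\<exists>g \<in> Aut C c. \<mu> = {x \<in> Aut C c. \<exists>h \<in> Aut C c. Comp C h x = Comp C g h})"

text \<open>The class function \<open>binom X \<mu>\<close> (with \<open>|\<mu>| = c\<close>) evaluated at \<open>\<sigma> \<in> G_d\<close>.\<close>
definition binomX :: "('o, 'm) cat \<Rightarrow> 'o \<Rightarrow> 'm set \<Rightarrow> 'o \<Rightarrow> 'm \<Rightarrow> nat" where
  "binomX C c \<mu> d \<sigma> = card {Orb \<in> binom C d c. \<exists>f \<in> Orb. \<exists>\<psi> \<in> \<mu>. Comp C \<sigma> f = Comp C f \<psi>}"

text \<open>A character polynomial, given by a finite family \<open>M\<close> of conjugacy classes
  \<open>(c, \<mu>)\<close> (with \<open>\<mu> \<subseteq> G_c\<close>) and coefficients \<open>a\<close>.\<close>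
definition charpoly :: "('o, 'm) cat \<Rightarrow> ('o \<times> 'm set) set \<Rightarrow> ('o \<times> 'm set \<Rightarrow> complex)
                         \<Rightarrow> 'o \<Rightarrow> 'm \<Rightarrow> complex" where
  "charpoly C M a d \<sigma> = (\<Sum>(c, \<mu>) \<in> M. a (c, \<mu>) * of_nat (binomX C c \<mu> d \<sigma>))"

definition charpoly_data :: "('o, 'm) cat \<Rightarrow> ('o \<times> 'm set) set \<Rightarrow> bool" where
  "charpoly_data C M \<longleftrightarrow> finite M \<and> (\<forall>(c, \<mu>) \<in> M. is_conj_class C c \<mu>)"

definition charpoly_deg_le :: "('o, 'm) cat \<Rightarrow> ('o \<times> 'm set) set \<Rightarrow> ('o \<times> 'm set \<Rightarrow> complex)
                                \<Rightarrow> 'o \<Rightarrow> bool" where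
  "charpoly_deg_le C M a c0 \<longleftrightarrow> (\<forall>(c, \<mu>) \<in> M. a (c, \<mu>) \<noteq> 0 \<longrightarrow> obj_le C c c0)"

definition expect :: "('o, 'm) cat \<Rightarrow> ('o \<Rightarrow> 'm \<Rightarrow> complex) \<Rightarrow> 'o \<Rightarrow> complex" where
  "expect C P d = (\<Sum>\<sigma> \<in> Aut C d. P d \<sigma>) / of_nat (card (Aut C d))"

definition mat_trace :: "complex mat \<Rightarrow> complex" where
  "mat_trace A = (\<Sum>i < dim_row A. A $$ (i, i))"

definition is_rep :: "('o, 'm) cat \<Rightarrow> 'o \<Rightarrow> nat \<Rightarrow> ('m \<Rightarrow> complex mat) \<Rightarrow> bool" where
  "is_rep C c n \<rho> \<longleftrightarrow> c \<in> Obj C \<and>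
     (\<forall>g \<in> Aut C c. \<rho> g \<in> carrier_mat n n) \<and>
     \<rho> (Idm C c) = 1\<^sub>m n \<and>
     (\<forall>g \<in> Aut C c. \<forall>h \<in> Aut C c. \<rho> (Comp C g h) = \<rho> g * \<rho> h)"

text \<open>Character of \<open>Ind_c(V)(d) = \<complex>[Hom(c,d)] \<otimes>_{\<complex>[G_c]} V\<close> at \<open>\<sigma> \<in> G_d\<close>.
  Since \<open>G_c\<close> acts freely on \<open>Hom(c,d)\<close>, this module is \<open>\<Oplus>_{[f]} V\<close> and its trace is
  \<open>\<Sum>_{[f] : \<sigma> f = f \<psi>} \<chi>_V(\<psi>) = (1/|G_c|) \<Sum>_{f, \<psi> \<in> G_c, \<sigma> f = f \<psi>} \<chi>_V(\<psi>)\<close>.\<close>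
definition ind_char :: "('o, 'm) cat \<Rightarrow> 'o \<Rightarrow> ('m \<Rightarrow> complex mat) \<Rightarrow> 'o \<Rightarrow> 'm \<Rightarrow> complex" where
  "ind_char C c \<rho> d \<sigma> =
     (\<Sum>f \<in> Hom C c d. \<Sum>\<psi> \<in> {\<psi> \<in> Aut C c. Comp C \<sigma> f = Comp C f \<psi>}. mat_trace (\<rho> \<psi>))
     / of_nat (card (Aut C c))"

text \<open>A free module \<open>\<Oplus>_i Ind_{c_i}(V_i)\<close>, given as a list of triples \<open>(c_i, n_i, \<rho>_i)\<close>.\<close>
definition free_module_data :: "('o, 'm) cat \<Rightarrow> ('o \<times> nat \<times> ('m \<Rightarrow> complex mat)) list \<Rightarrow> bool" where
  "free_module_data C F \<longleftrightarrow> (\<forall>(c, n, \<rho>) \<in> set F. is_rep C c n \<rho>)"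

definition free_char :: "('o, 'm) cat \<Rightarrow> ('o \<times> nat \<times> ('m \<Rightarrow> complex mat)) list \<Rightarrow> 'o \<Rightarrow> 'm \<Rightarrow> complex" where
  "free_char C F d \<sigma> = (\<Sum>(c, n, \<rho>) \<leftarrow> F. ind_char C c \<rho> d \<sigma>)"

end

theory Submission
  imports Defs "Jordan_Normal_Form.Schur_Decomposition"
begin

(* Everything rests on one double count. For c <= d, the group G_d acts transitively on
   Hom(c,d), so every fibre of sigma |-> sigma f has |G_d|/|Hom(c,d)| elements; hence for any
   function t on G_c, summing over sigma in G_d the sum of t(psi) over the pairs (f, psi) with
   sigma f = f psi gives |G_d| * sum_{psi in G_c} t(psi).
   For t the indicator of a conjugacy class mu, the inner sum is |G_c| * binom(X, mu)(sigma),
   because G_c acts freely on Hom(c,d) and the twisting condition is invariant along orbits;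
   so E_{G_d}[binom(X, mu)] = |mu| / |G_c| does not depend on d. For t the character of V it
   is |G_c| times the character of Ind_c(V), so E_{G_d}[Ind_c(V)] is the average character of V,
   i.e. the trace of the idempotent (1/|G_c|) sum rho(g), a natural number, when c <= d, and 0
   otherwise. Summing over the summands of a free module yields natural numbers that can only
   grow with d. *)

section \<open>Traces of idempotent matrices\<close>

lemma mat_trace_mult_comm:
  fixes X Y :: "complex mat"
  assumes "X \<in> carrier_mat n m" "Y \<in> carrier_mat m n"
  shows "mat_trace (X * Y) = mat_trace (Y * X)"
proof -
  have "mat_trace (X * Y) = (\<Sum>i<n. \<Sum>k<m. X $$ (i,k) * Y $$ (k,i))"
    using assms unfolding mat_trace_def
    by (intro sum.cong) (auto simp: scalar_prod_def atLeast0LessThan)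
  also have "\<dots> = (\<Sum>k<m. \<Sum>i<n. Y $$ (k,i) * X $$ (i,k))"
    by (subst sum.swap) (simp add: mult.commute)
  also have "\<dots> = mat_trace (Y * X)"
    using assms unfolding mat_trace_def
    by (intro sum.cong) (auto simp: scalar_prod_def atLeast0LessThan)
  finally show ?thesis .
qed

lemma mat_trace_similar_mat_wit:
  assumes "similar_mat_wit A B P Q"
  shows "mat_trace A = mat_trace B"
proof -
  obtain n where carrier: "B \<in> carrier_mat n n" "P \<in> carrier_mat n n" "Q \<in> carrier_mat n n"
    and QP: "Q * P = 1\<^sub>m n" and A_eq: "A = P * B * Q"
    using similar_mat_witD[OF refl assms] by blast
  have "mat_trace A = mat_trace (P * (B * Q))"
    unfolding A_eq using carrier by (simp add: assoc_mult_mat[of _ n n _ n _ n])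
  also have "\<dots> = mat_trace ((B * Q) * P)"
    using carrier by (intro mat_trace_mult_comm) auto
  also have "\<dots> = mat_trace B"
    using carrier QP by (simp add: assoc_mult_mat[of _ n n _ n _ n])
  finally show ?thesis .
qed

lemma similar_mat_wit_idempotent:
  assumes "similar_mat_wit A B P Q" and idem: "A * A = A"
  shows "B * B = B"
proof -
  obtain n where carrier: "A \<in> carrier_mat n n" "P \<in> carrier_mat n n" "Q \<in> carrier_mat n n"
    and PQ: "P * Q = 1\<^sub>m n" and B_eq: "B = Q * A * P"
    using similar_mat_witD[OF refl similar_mat_wit_sym[OF assms(1)]] by blast
  have "B * B = Q * A * (P * Q) * A * P"
    unfolding B_eq using carrier by (simp add: assoc_mult_mat[of _ n n _ n _ n])
  also have "\<dots> = Q * (A * A) * P"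
    unfolding PQ using carrier by (simp add: assoc_mult_mat[of _ n n _ n _ n])
  finally show ?thesis
    unfolding idem B_eq .
qed

lemma upper_triangular_idempotent_diag:
  fixes B :: "'a::idom mat"
  assumes B: "B \<in> carrier_mat n n" "upper_triangular B" and idem: "B * B = B" and i: "i < n"
  shows "B $$ (i,i) = 0 \<or> B $$ (i,i) = 1"
proof -
  have off_diag: "B $$ (i,k) * B $$ (k,i) = 0" if "k < n" "k \<noteq> i" for k
    using B i that upper_triangularD[OF B(2), of k i] upper_triangularD[OF B(2), of i k]
    by (cases "k < i") auto
  have "B $$ (i,i) = (B * B) $$ (i,i)" using idem by simp
  also have "\<dots> = (\<Sum>k\<in>{0..<n}. B $$ (i,k) * B $$ (k,i))"
    using B i by (simp add: scalar_prod_def)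
  also have "\<dots> = B $$ (i,i) * B $$ (i,i)"
    using i off_diag by (simp add: sum.remove[of "{0..<n}" i] sum.neutral)
  finally show ?thesis
    using mult_cancel_left[of "B $$ (i,i)" "B $$ (i,i)" 1] by auto
qed

lemma mat_trace_idempotent_nat:
  fixes A :: "complex mat"
  assumes A: "A \<in> carrier_mat n n" and idem: "A * A = A"
  shows "\<exists>k::nat. mat_trace A = of_nat k"
proof -
  obtain es where "char_poly A = (\<Prod>a \<leftarrow> es. [:- a, 1:])"
    using char_poly_factorized[OF A] by blast
  then obtain B where B: "B \<in> carrier_mat n n" "upper_triangular B" and "similar_mat A B"
    using schur_decomposition_exists[OF A] by blast
  then obtain P Q where sim: "similar_mat_wit A B P Q"
    unfolding similar_mat_def by blast
  note diag = upper_triangular_idempotent_diag[OF B similar_mat_wit_idempotent[OF sim idem]]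
  have "mat_trace A = (\<Sum>i<n. B $$ (i,i))"
    using mat_trace_similar_mat_wit[OF sim] B unfolding mat_trace_def by simp
  also have "\<dots> = (\<Sum>i<n. of_nat (if B $$ (i,i) = 1 then 1 else 0))"
  proof (rule sum.cong[OF refl])
    fix i assume "i \<in> {..<n}"
    then show "B $$ (i,i) = of_nat (if B $$ (i,i) = 1 then 1 else 0)"
      using diag[of i] by auto
  qed
  also have "\<dots> = of_nat (\<Sum>i<n. if B $$ (i,i) = 1 then 1 else 0)"
    by simp
  finally show ?thesis ..
qed

lemma average_trace_nat:
  fixes \<rho> :: "'g \<Rightarrow> complex mat" and mult :: "'g \<Rightarrow> 'g \<Rightarrow> 'g"
  assumes G: "finite G" "G \<noteq> {}"
    and carrier: "\<And>g. g \<in> G \<Longrightarrow> \<rho> g \<in> carrier_mat n n"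
    and hom: "\<And>g h. g \<in> G \<Longrightarrow> h \<in> G \<Longrightarrow> \<rho> (mult g h) = \<rho> g * \<rho> h"
    and translation: "\<And>g. g \<in> G \<Longrightarrow> bij_betw (mult g) G G"
  shows "\<exists>k::nat. (\<Sum>g\<in>G. mat_trace (\<rho> g)) / of_nat (card G) = of_nat k"
proof -
  define N :: complex where "N = of_nat (card G)"
  have N: "N \<noteq> 0" using G unfolding N_def by simp
  define S where "S i j = (\<Sum>g\<in>G. \<rho> g $$ (i,j))" for i j
  define E where "E = mat n n (\<lambda>(i,j). S i j / N)"
  have E: "E \<in> carrier_mat n n" unfolding E_def by simp
  have S_translate: "(\<Sum>h\<in>G. \<rho> (mult g h) $$ (i,j)) = S i j" if "g \<in> G" for g i j
    unfolding S_def using sum.reindex_bij_betw[OF translation[OF that]] .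
  have S_square: "(\<Sum>k<n. S i k * S k j) = N * S i j" if "i < n" "j < n" for i j
  proof -
    have "(\<Sum>k<n. S i k * S k j) = (\<Sum>g\<in>G. \<Sum>h\<in>G. \<Sum>k<n. \<rho> g $$ (i,k) * \<rho> h $$ (k,j))"
      unfolding S_def sum_product by (subst sum.swap) (simp add: sum.swap[of _ "{..<n}"])
    also have "\<dots> = (\<Sum>g\<in>G. \<Sum>h\<in>G. \<rho> (mult g h) $$ (i,j))"
    proof (intro sum.cong refl)
      fix g h assume "g \<in> G" "h \<in> G"
      with carrier[of g] carrier[of h] show "(\<Sum>k<n. \<rho> g $$ (i,k) * \<rho> h $$ (k,j)) = \<rho> (mult g h) $$ (i,j)"
        using that by (auto simp: hom scalar_prod_def atLeast0LessThan)
    qed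
    also have "\<dots> = N * S i j"
      using S_translate unfolding N_def by simp
    finally show ?thesis .
  qed
  have "E * E = E"
  proof (rule eq_matI)
    fix i j assume "i < dim_row E" "j < dim_col E"
    then have ij: "i < n" "j < n" using E by auto
    have "(E * E) $$ (i,j) = (\<Sum>k<n. S i k * S k j) / (N * N)"
      using ij unfolding E_def
      by (simp add: scalar_prod_def atLeast0LessThan sum_divide_distrib)
    also have "\<dots> = E $$ (i,j)"
      using ij N unfolding S_square[OF ij] E_def by simp
    finally show "(E * E) $$ (i,j) = E $$ (i,j)" .
  qed (use E in auto)
  moreover have "mat_trace E = (\<Sum>g\<in>G. mat_trace (\<rho> g)) / N"
  proof -
    have "mat_trace E = (\<Sum>g\<in>G. \<Sum>i<n. \<rho> g $$ (i,i)) / N"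
      unfolding mat_trace_def E_def S_def by (simp add: sum_divide_distrib sum.swap[of _ "{..<n}"])
    also have "\<dots> = (\<Sum>g\<in>G. mat_trace (\<rho> g)) / N"
    proof -
      have "(\<Sum>i<n. \<rho> g $$ (i,i)) = mat_trace (\<rho> g)" if "g \<in> G" for g
        using carrier[OF that] unfolding mat_trace_def by (simp add: carrier_matD)
      then show ?thesis by simp
    qed
    finally show ?thesis .
  qed
  ultimately show ?thesis
    using mat_trace_idempotent_nat[OF E] unfolding N_def by metis
qed

section \<open>Categories of FI type\<close>

definition Aut_orbit :: "('o, 'm) cat \<Rightarrow> 'o \<Rightarrow> 'm \<Rightarrow> 'm set" where
  "Aut_orbit C c f = Comp C f ` Aut C c"

lemma binom_eq_Aut_orbits: "binom C d c = Aut_orbit C c ` Hom C c d"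
  unfolding binom_def Aut_orbit_def by (simp add: Setcompr_eq_image)

locale FI_category =
  fixes C :: "('o, 'm) cat"
  assumes FI_type: "FI_type C"
begin

lemma is_category: "is_category C"
  using FI_type unfolding FI_type_def by (elim conjE) assumption

lemma Dom_Cod_Obj: "f \<in> Mor C \<Longrightarrow> Dom C f \<in> Obj C \<and> Cod C f \<in> Obj C"
  using is_category unfolding is_category_def by blast

lemma Idm_in_Hom: "c \<in> Obj C \<Longrightarrow> Idm C c \<in> Hom C c c"
  using is_category unfolding is_category_def by blast

lemma Comp_in_Mor:
  "f \<in> Mor C \<Longrightarrow> g \<in> Mor C \<Longrightarrow> Cod C f = Dom C g \<Longrightarrow> Comp C g f \<in> Hom C (Dom C f) (Cod C g)"
  using is_category unfolding is_category_def by blast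

lemma Comp_Idm_Mor: "f \<in> Mor C \<Longrightarrow> Comp C f (Idm C (Dom C f)) = f \<and> Comp C (Idm C (Cod C f)) f = f"
  using is_category unfolding is_category_def by blast

lemma Comp_assoc_Mor:
  "f \<in> Mor C \<Longrightarrow> g \<in> Mor C \<Longrightarrow> h \<in> Mor C \<Longrightarrow> Cod C f = Dom C g \<Longrightarrow> Cod C g = Dom C h \<Longrightarrow>
   Comp C h (Comp C g f) = Comp C (Comp C h g) f"
  using is_category unfolding is_category_def by blast

lemma Hom_memD: "f \<in> Hom C a b \<Longrightarrow> f \<in> Mor C \<and> Dom C f = a \<and> Cod C f = b"
  unfolding Hom_def by blast

lemma Hom_objects: "f \<in> Hom C a b \<Longrightarrow> a \<in> Obj C \<and> b \<in> Obj C"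
  using Dom_Cod_Obj Hom_memD by blast

lemma Comp_in_Hom: "f \<in> Hom C a b \<Longrightarrow> g \<in> Hom C b c \<Longrightarrow> Comp C g f \<in> Hom C a c"
  using Comp_in_Mor Hom_memD by fastforce

lemma Comp_Idm_left: "f \<in> Hom C a b \<Longrightarrow> Comp C (Idm C b) f = f"
  using Comp_Idm_Mor Hom_memD by fastforce

lemma Comp_Idm_right: "f \<in> Hom C a b \<Longrightarrow> Comp C f (Idm C a) = f"
  using Comp_Idm_Mor Hom_memD by fastforce

lemma Comp_assoc:
  "f \<in> Hom C a b \<Longrightarrow> g \<in> Hom C b c \<Longrightarrow> h \<in> Hom C c d \<Longrightarrow>
   Comp C h (Comp C g f) = Comp C (Comp C h g) f"
  using Comp_assoc_Mor Hom_memD by simp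

lemma Comp_cancel_left:
  assumes "f \<in> Hom C b c" "g \<in> Hom C a b" "h \<in> Hom C a b" "Comp C f g = Comp C f h"
  shows "g = h"
proof -
  have "\<forall>f \<in> Mor C. \<forall>g \<in> Mor C. \<forall>h \<in> Mor C.
          Cod C g = Dom C f \<longrightarrow> Dom C h = Dom C g \<longrightarrow> Cod C h = Dom C f \<longrightarrow>
          Comp C f g = Comp C f h \<longrightarrow> g = h"
    using FI_type unfolding FI_type_def by (elim conjE) assumption
  moreover have "f \<in> Mor C" "g \<in> Mor C" "h \<in> Mor C"
    "Cod C g = Dom C f" "Dom C h = Dom C g" "Cod C h = Dom C f"
    using assms(1-3) by (auto simp: Hom_def)
  ultimately show ?thesis
    using assms(4) by blast
qed

lemma Aut_eq_Hom: "Aut C d = Hom C d d"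
proof (cases "d \<in> Obj C")
  case True
  have "\<forall>d \<in> Obj C. Hom C d d = Aut C d"
    using FI_type unfolding FI_type_def by (elim conjE) assumption
  then show ?thesis using True by simp
next
  case False
  then show ?thesis using Hom_objects unfolding Aut_def by blast
qed

lemma Aut_inverse:
  assumes "g \<in> Aut C d"
  obtains g' where "g' \<in> Aut C d" "Comp C g' g = Idm C d" "Comp C g g' = Idm C d"
  using assms Aut_eq_Hom unfolding Aut_def by blast

lemma Aut_transitive:
  assumes "f \<in> Hom C c d" "g \<in> Hom C c d"
  obtains \<sigma> where "\<sigma> \<in> Aut C d" "Comp C \<sigma> f = g"
proof -
  have "\<forall>c \<in> Obj C. \<forall>d \<in> Obj C. \<forall>f \<in> Hom C c d. \<forall>g \<in> Hom C c d. \<exists>\<sigma> \<in> Aut C d. Comp C \<sigma> f = g"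
    using FI_type unfolding FI_type_def by (elim conjE) assumption
  then show ?thesis using assms Hom_objects that by meson
qed

lemma finite_Hom: "finite (Hom C c d)"
proof (cases "c \<in> Obj C \<and> d \<in> Obj C")
  case True
  have "\<forall>c \<in> Obj C. \<forall>d \<in> Obj C. finite (Hom C c d)"
    using FI_type unfolding FI_type_def by (elim conjE) assumption
  then show ?thesis using True by blast
next
  case False
  then have "Hom C c d = {}" using Hom_objects by blast
  then show ?thesis by simp
qed

lemma finite_Aut: "finite (Aut C d)"
  using finite_Hom Aut_eq_Hom by simp

lemma card_Aut_pos: "d \<in> Obj C \<Longrightarrow> card (Aut C d) > 0"
  using finite_Aut Idm_in_Hom Aut_eq_Hom card_gt_0_iff by blast

lemma obj_le_trans: "obj_le C a b \<Longrightarrow> obj_le C b c \<Longrightarrow> obj_le C a c"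
  unfolding obj_le_def using Comp_in_Hom by blast

lemma bij_betw_Comp_Aut:
  assumes \<sigma>: "\<sigma> \<in> Aut C d"
  shows "bij_betw (Comp C \<sigma>) (Hom C c d) (Hom C c d)"
proof (rule bij_betw_imageI)
  have \<sigma>_Hom: "\<sigma> \<in> Hom C d d" using \<sigma> Aut_eq_Hom by simp
  show "inj_on (Comp C \<sigma>) (Hom C c d)"
    using Comp_cancel_left[OF \<sigma>_Hom] by (meson inj_onI)
  obtain \<sigma>' where \<sigma>': "\<sigma>' \<in> Hom C d d" "Comp C \<sigma> \<sigma>' = Idm C d"
    using Aut_inverse[OF \<sigma>] Aut_eq_Hom by metis
  have "g \<in> Comp C \<sigma> ` Hom C c d" if g: "g \<in> Hom C c d" for g
  proof
    show "g = Comp C \<sigma> (Comp C \<sigma>' g)"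
      using Comp_assoc[OF g \<sigma>'(1) \<sigma>_Hom] \<sigma>'(2) Comp_Idm_left[OF g] by simp
  qed (use g \<sigma>' Comp_in_Hom in blast)
  then show "Comp C \<sigma> ` Hom C c d = Hom C c d"
    using \<sigma>_Hom Comp_in_Hom by blast
qed

subsection \<open>Counting twisted fixed points\<close>

lemma card_fibre_le:
  assumes f: "f \<in> Hom C c d" and g: "g \<in> Hom C c d" and g': "g' \<in> Hom C c d"
  shows "card {\<sigma> \<in> Aut C d. Comp C \<sigma> f = g} \<le> card {\<sigma> \<in> Aut C d. Comp C \<sigma> f = g'}"
proof -
  obtain \<tau> where \<tau>: "\<tau> \<in> Aut C d" "Comp C \<tau> g = g'"
    using Aut_transitive[OF g g'] .
  show ?thesis
  proof (rule card_inj_on_le)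
    show "inj_on (Comp C \<tau>) {\<sigma> \<in> Aut C d. Comp C \<sigma> f = g}"
      using bij_betw_imp_inj_on[OF bij_betw_Comp_Aut[OF \<tau>(1), of d]] Aut_eq_Hom
      by (auto intro: inj_on_subset)
    show "Comp C \<tau> ` {\<sigma> \<in> Aut C d. Comp C \<sigma> f = g} \<subseteq> {\<sigma> \<in> Aut C d. Comp C \<sigma> f = g'}"
    proof
      fix x assume "x \<in> Comp C \<tau> ` {\<sigma> \<in> Aut C d. Comp C \<sigma> f = g}"
      then obtain \<sigma> where \<sigma>: "\<sigma> \<in> Hom C d d" "Comp C \<sigma> f = g" and x: "x = Comp C \<tau> \<sigma>"
        using Aut_eq_Hom by blast
      have \<tau>_Hom: "\<tau> \<in> Hom C d d" using \<tau>(1) Aut_eq_Hom by simp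
      have "Comp C x f = g'"
        using Comp_assoc[OF f \<sigma>(1) \<tau>_Hom] \<sigma>(2) \<tau>(2) x by simp
      moreover have "x \<in> Aut C d"
        using Comp_in_Hom[OF \<sigma>(1) \<tau>_Hom] x Aut_eq_Hom by simp
      ultimately show "x \<in> {\<sigma> \<in> Aut C d. Comp C \<sigma> f = g'}" by simp
    qed
  qed (simp add: finite_Aut)
qed

lemma card_Aut_eq_card_Hom_mult_fibre:
  assumes f: "f \<in> Hom C c d" and g: "g \<in> Hom C c d"
  shows "card (Aut C d) = card (Hom C c d) * card {\<sigma> \<in> Aut C d. Comp C \<sigma> f = g}"
proof -
  have partition: "(\<Union>g'\<in>Hom C c d. {\<sigma> \<in> Aut C d. Comp C \<sigma> f = g'}) = Aut C d"
    unfolding Aut_eq_Hom using f Comp_in_Hom by blast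
  have "card (\<Union>g'\<in>Hom C c d. {\<sigma> \<in> Aut C d. Comp C \<sigma> f = g'})
      = (\<Sum>g'\<in>Hom C c d. card {\<sigma> \<in> Aut C d. Comp C \<sigma> f = g'})"
    by (rule card_UN_disjoint) (auto simp: finite_Hom finite_Aut)
  then have "card (Aut C d) = (\<Sum>g'\<in>Hom C c d. card {\<sigma> \<in> Aut C d. Comp C \<sigma> f = g'})"
    unfolding partition .
  also have "\<dots> = (\<Sum>g'\<in>Hom C c d. card {\<sigma> \<in> Aut C d. Comp C \<sigma> f = g})"
    using card_fibre_le[OF f g] card_fibre_le[OF f _ g] by (intro sum.cong refl antisym)
  finally show ?thesis by simp
qed

lemma sum_twisted_fixed_points:
  fixes t :: "'m \<Rightarrow> 'a::comm_semiring_1"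
  assumes "Hom C c d \<noteq> {}"
  shows "(\<Sum>\<sigma>\<in>Aut C d. \<Sum>f\<in>Hom C c d. \<Sum>\<psi>\<in>{\<psi> \<in> Aut C c. Comp C \<sigma> f = Comp C f \<psi>}. t \<psi>)
       = of_nat (card (Aut C d)) * (\<Sum>\<psi>\<in>Aut C c. t \<psi>)"
proof -
  obtain f\<^sub>0 where f\<^sub>0: "f\<^sub>0 \<in> Hom C c d" using assms by blast
  define k where "k = card {\<sigma> \<in> Aut C d. Comp C \<sigma> f\<^sub>0 = f\<^sub>0}"
  have card_Hom_k: "card (Hom C c d) * k = card (Aut C d)"
    unfolding k_def using card_Aut_eq_card_Hom_mult_fibre[OF f\<^sub>0 f\<^sub>0] by simp
  have fibre: "card {\<sigma> \<in> Aut C d. Comp C \<sigma> f = g} = k" if "f \<in> Hom C c d" "g \<in> Hom C c d" for f g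
    using card_Aut_eq_card_Hom_mult_fibre[OF that] card_Hom_k finite_Hom assms by simp
  have "(\<Sum>\<sigma>\<in>Aut C d. \<Sum>f\<in>Hom C c d. \<Sum>\<psi>\<in>{\<psi> \<in> Aut C c. Comp C \<sigma> f = Comp C f \<psi>}. t \<psi>)
      = (\<Sum>\<sigma>\<in>Aut C d. \<Sum>f\<in>Hom C c d. \<Sum>\<psi>\<in>Aut C c. if Comp C \<sigma> f = Comp C f \<psi> then t \<psi> else 0)"
    by (simp add: sum.inter_filter finite_Aut)
  also have "\<dots> = (\<Sum>f\<in>Hom C c d. \<Sum>\<psi>\<in>Aut C c. \<Sum>\<sigma>\<in>Aut C d. if Comp C \<sigma> f = Comp C f \<psi> then t \<psi> else 0)"
    by (subst sum.swap) (simp add: sum.swap[of _ "Aut C d"])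
  also have "\<dots> = (\<Sum>f\<in>Hom C c d. \<Sum>\<psi>\<in>Aut C c. of_nat k * t \<psi>)"
  proof (intro sum.cong refl)
    fix f \<psi> assume f: "f \<in> Hom C c d" and \<psi>: "\<psi> \<in> Aut C c"
    have f\<psi>: "Comp C f \<psi> \<in> Hom C c d"
      using Comp_in_Hom[of \<psi> c c f d] f \<psi> unfolding Aut_eq_Hom by blast
    show "(\<Sum>\<sigma>\<in>Aut C d. if Comp C \<sigma> f = Comp C f \<psi> then t \<psi> else 0) = of_nat k * t \<psi>"
      using fibre[OF f f\<psi>] by (simp add: sum.inter_filter[symmetric] finite_Aut)
  qed
  also have "\<dots> = of_nat (card (Hom C c d) * k) * (\<Sum>\<psi>\<in>Aut C c. t \<psi>)"
    by (simp add: sum_distrib_left mult.assoc)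
  finally show ?thesis
    unfolding card_Hom_k .
qed

subsection \<open>Character polynomials\<close>

lemma Aut_orbit_subset: "f \<in> Hom C c d \<Longrightarrow> Aut_orbit C c f \<subseteq> Hom C c d"
  unfolding Aut_orbit_def Aut_eq_Hom using Comp_in_Hom by blast

lemma Aut_orbit_self:
  assumes f: "f \<in> Hom C c d"
  shows "f \<in> Aut_orbit C c f"
proof -
  have "Idm C c \<in> Hom C c c" using Idm_in_Hom Hom_objects[OF f] by blast
  moreover have "f = Comp C f (Idm C c)" using Comp_Idm_right[OF f] by simp
  ultimately show ?thesis unfolding Aut_orbit_def Aut_eq_Hom by blast
qed

lemma card_Aut_orbit: "f \<in> Hom C c d \<Longrightarrow> card (Aut_orbit C c f) = card (Aut C c)"
  unfolding Aut_orbit_def Aut_eq_Hom by (rule card_image) (meson Comp_cancel_left inj_onI)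

lemma Aut_orbit_eq:
  assumes f: "f \<in> Hom C c d" and g: "g \<in> Aut_orbit C c f"
  shows "Aut_orbit C c g = Aut_orbit C c f"
proof -
  obtain p where p: "p \<in> Hom C c c" and g_eq: "g = Comp C f p"
    using g unfolding Aut_orbit_def Aut_eq_Hom by blast
  have "Aut_orbit C c g = (\<lambda>\<psi>. Comp C f (Comp C p \<psi>)) ` Hom C c c"
    unfolding Aut_orbit_def Aut_eq_Hom g_eq using Comp_assoc[OF _ p f] by simp
  also have "\<dots> = Comp C f ` (Comp C p ` Hom C c c)"
    by (simp add: image_image)
  also have "Comp C p ` Hom C c c = Hom C c c"
    using bij_betw_Comp_Aut[of p c c] p unfolding Aut_eq_Hom bij_betw_def by blast
  finally show ?thesis
    unfolding Aut_orbit_def Aut_eq_Hom .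
qed

lemma card_filter_Hom_eq_orbits:
  assumes Q_invariant: "\<And>f \<psi>. f \<in> Hom C c d \<Longrightarrow> \<psi> \<in> Aut C c \<Longrightarrow> Q f \<Longrightarrow> Q (Comp C f \<psi>)"
  shows "card {f \<in> Hom C c d. Q f} = card (Aut C c) * card {Orb \<in> binom C d c. \<exists>f \<in> Orb. Q f}"
proof -
  let ?B = "{Orb \<in> binom C d c. \<exists>f \<in> Orb. Q f}"
  have orbit: "\<exists>f \<in> Hom C c d. Orb = Aut_orbit C c f" if "Orb \<in> ?B" for Orb
    using that unfolding binom_eq_Aut_orbits by blast
  have union: "\<Union>?B = {f \<in> Hom C c d. Q f}"
  proof (intro equalityI subsetI)
    fix x assume "x \<in> \<Union>?B"
    then obtain Orb g where Orb: "Orb \<in> ?B" "x \<in> Orb" and g: "g \<in> Orb" "Q g" by blast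
    obtain f where f: "f \<in> Hom C c d" and Orb_eq: "Orb = Aut_orbit C c f"
      using orbit[OF Orb(1)] by blast
    have g_Hom: "g \<in> Hom C c d" using Aut_orbit_subset[OF f] g(1) Orb_eq by blast
    then have "x \<in> Aut_orbit C c g" using Aut_orbit_eq[OF f] g(1) Orb(2) Orb_eq by simp
    then obtain \<psi> where "\<psi> \<in> Aut C c" "x = Comp C g \<psi>" unfolding Aut_orbit_def by blast
    then show "x \<in> {f \<in> Hom C c d. Q f}"
      using Q_invariant[OF g_Hom _ g(2)] Aut_orbit_subset[OF g_Hom] \<open>x \<in> Aut_orbit C c g\<close> by blast
  next
    fix x assume "x \<in> {f \<in> Hom C c d. Q f}"
    then show "x \<in> \<Union>?B"
      using Aut_orbit_self unfolding binom_eq_Aut_orbits by blast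
  qed
  have "card (Aut C c) * card ?B = card (\<Union>?B)"
  proof (rule card_partition)
    show "finite ?B"
      unfolding binom_eq_Aut_orbits using finite_Hom by simp
    show "finite (\<Union>?B)"
      unfolding union using finite_Hom by simp
    show "card Orb = card (Aut C c)" if "Orb \<in> ?B" for Orb
      using orbit[OF that] card_Aut_orbit by blast
    show "Orb\<^sub>1 \<inter> Orb\<^sub>2 = {}" if "Orb\<^sub>1 \<in> ?B" "Orb\<^sub>2 \<in> ?B" "Orb\<^sub>1 \<noteq> Orb\<^sub>2" for Orb\<^sub>1 Orb\<^sub>2
    proof (rule ccontr)
      assume "Orb\<^sub>1 \<inter> Orb\<^sub>2 \<noteq> {}"
      then obtain x where "x \<in> Orb\<^sub>1" "x \<in> Orb\<^sub>2" by blast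
      then show False
        using orbit[OF that(1)] orbit[OF that(2)] Aut_orbit_eq that(3) by metis
    qed
  qed
  then show ?thesis
    unfolding union by simp
qed

lemma conj_class_subset: "is_conj_class C c \<mu> \<Longrightarrow> \<mu> \<subseteq> Hom C c c"
  unfolding is_conj_class_def Aut_eq_Hom by blast

lemma conj_class_conjugate:
  assumes \<mu>: "is_conj_class C c \<mu>" and \<psi>: "\<psi> \<in> \<mu>"
    and p: "p \<in> Hom C c c" and p': "p' \<in> Hom C c c" and inverse: "Comp C p p' = Idm C c"
  shows "Comp C p' (Comp C \<psi> p) \<in> \<mu>"
proof -
  obtain g where g: "g \<in> Hom C c c"
    and \<mu>_eq: "\<mu> = {x \<in> Hom C c c. \<exists>h \<in> Hom C c c. Comp C h x = Comp C g h}"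
    using \<mu> unfolding is_conj_class_def Aut_eq_Hom by blast
  obtain h where h: "h \<in> Hom C c c" "Comp C h \<psi> = Comp C g h" and \<psi>_Hom: "\<psi> \<in> Hom C c c"
    using \<psi> \<mu>_eq by blast
  have \<psi>p: "Comp C \<psi> p \<in> Hom C c c" using Comp_in_Hom[OF p \<psi>_Hom] .
  define x where "x = Comp C p' (Comp C \<psi> p)"
  have x: "x \<in> Hom C c c" unfolding x_def using Comp_in_Hom[OF \<psi>p p'] .
  have "Comp C (Comp C h p) x = Comp C h (Comp C p x)"
    using Comp_assoc[OF x p h(1)] by simp
  also have "\<dots> = Comp C h (Comp C (Comp C p p') (Comp C \<psi> p))"
    unfolding x_def using Comp_assoc[OF \<psi>p p' p] by simp
  also have "\<dots> = Comp C h (Comp C \<psi> p)"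
    using inverse Comp_Idm_left[OF \<psi>p] by simp
  also have "\<dots> = Comp C (Comp C g h) p"
    using Comp_assoc[OF p \<psi>_Hom h(1)] h(2) by simp
  also have "\<dots> = Comp C g (Comp C h p)"
    using Comp_assoc[OF p h(1) g] by simp
  finally have "Comp C (Comp C h p) x = Comp C g (Comp C h p)" .
  then show ?thesis
    unfolding \<mu>_eq x_def[symmetric] using x Comp_in_Hom[OF p h(1)] by blast
qed

lemma conj_class_twisted_invariant:
  assumes \<mu>: "is_conj_class C c \<mu>" and \<sigma>: "\<sigma> \<in> Hom C d d" and f: "f \<in> Hom C c d"
    and p: "p \<in> Hom C c c" and twisted: "\<exists>\<psi> \<in> \<mu>. Comp C \<sigma> f = Comp C f \<psi>"
  shows "\<exists>\<psi> \<in> \<mu>. Comp C \<sigma> (Comp C f p) = Comp C (Comp C f p) \<psi>"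
proof -
  obtain \<psi> where \<psi>: "\<psi> \<in> \<mu>" "Comp C \<sigma> f = Comp C f \<psi>" using twisted by blast
  have \<psi>_Hom: "\<psi> \<in> Hom C c c" using conj_class_subset[OF \<mu>] \<psi>(1) by blast
  obtain p' where p': "p' \<in> Hom C c c" "Comp C p p' = Idm C c"
    using Aut_inverse[of p c] p unfolding Aut_eq_Hom by metis
  have \<psi>p: "Comp C \<psi> p \<in> Hom C c c" using Comp_in_Hom[OF p \<psi>_Hom] .
  have "Comp C \<sigma> (Comp C f p) = Comp C (Comp C f \<psi>) p"
    using Comp_assoc[OF p f \<sigma>] \<psi>(2) by simp
  also have "\<dots> = Comp C f (Comp C (Comp C p p') (Comp C \<psi> p))"
    using Comp_assoc[OF p \<psi>_Hom f] p'(2) Comp_Idm_left[OF \<psi>p] by simp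
  also have "\<dots> = Comp C (Comp C f p) (Comp C p' (Comp C \<psi> p))"
    using Comp_assoc[OF \<psi>p p'(1) p] Comp_assoc[OF Comp_in_Hom[OF \<psi>p p'(1)] p f] by simp
  finally show ?thesis
    using conj_class_conjugate[OF \<mu> \<psi>(1) p p'] by blast
qed

lemma card_Aut_mult_binomX:
  assumes \<mu>: "is_conj_class C c \<mu>" and \<sigma>: "\<sigma> \<in> Aut C d"
  shows "card (Aut C c) * binomX C c \<mu> d \<sigma> = card {f \<in> Hom C c d. \<exists>\<psi> \<in> \<mu>. Comp C \<sigma> f = Comp C f \<psi>}"
proof -
  have "card {f \<in> Hom C c d. \<exists>\<psi> \<in> \<mu>. Comp C \<sigma> f = Comp C f \<psi>}
      = card (Aut C c) * card {Orb \<in> binom C d c. \<exists>f \<in> Orb. \<exists>\<psi> \<in> \<mu>. Comp C \<sigma> f = Comp C f \<psi>}"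
  proof (rule card_filter_Hom_eq_orbits)
    fix f p assume "f \<in> Hom C c d" "p \<in> Aut C c" "\<exists>\<psi> \<in> \<mu>. Comp C \<sigma> f = Comp C f \<psi>"
    then show "\<exists>\<psi> \<in> \<mu>. Comp C \<sigma> (Comp C f p) = Comp C (Comp C f p) \<psi>"
      using conj_class_twisted_invariant[OF \<mu>] \<sigma> unfolding Aut_eq_Hom by blast
  qed
  then show ?thesis
    unfolding binomX_def by simp
qed

lemma card_twisted_fixed_eq_sum:
  assumes \<mu>: "\<mu> \<subseteq> Aut C c"
  shows "card {f \<in> Hom C c d. \<exists>\<psi> \<in> \<mu>. Comp C \<sigma> f = Comp C f \<psi>}
       = (\<Sum>f\<in>Hom C c d. \<Sum>\<psi>\<in>{\<psi> \<in> Aut C c. Comp C \<sigma> f = Comp C f \<psi>}. if \<psi> \<in> \<mu> then 1 else 0)"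
proof -
  have "(\<Sum>\<psi>\<in>{\<psi> \<in> Aut C c. Comp C \<sigma> f = Comp C f \<psi>}. if \<psi> \<in> \<mu> then 1 else 0)
      = (if \<exists>\<psi> \<in> \<mu>. Comp C \<sigma> f = Comp C f \<psi> then 1 else 0)" if f: "f \<in> Hom C c d" for f
  proof (cases "\<exists>\<psi> \<in> Aut C c. Comp C \<sigma> f = Comp C f \<psi>")
    case True
    then obtain \<psi>\<^sub>0 where \<psi>\<^sub>0: "\<psi>\<^sub>0 \<in> Aut C c" "Comp C \<sigma> f = Comp C f \<psi>\<^sub>0" by blast
    have "{\<psi> \<in> Aut C c. Comp C \<sigma> f = Comp C f \<psi>} = {\<psi>\<^sub>0}"
    proof (intro equalityI subsetI)
      fix \<psi> assume "\<psi> \<in> {\<psi> \<in> Aut C c. Comp C \<sigma> f = Comp C f \<psi>}"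
      then have "\<psi> \<in> Hom C c c" "Comp C f \<psi> = Comp C f \<psi>\<^sub>0"
        using \<psi>\<^sub>0(2) unfolding Aut_eq_Hom by auto
      moreover have "\<psi>\<^sub>0 \<in> Hom C c c" using \<psi>\<^sub>0(1) unfolding Aut_eq_Hom .
      ultimately show "\<psi> \<in> {\<psi>\<^sub>0}" using Comp_cancel_left[OF f] by blast
    qed (use \<psi>\<^sub>0 in simp)
    then show ?thesis using \<mu> by auto
  next
    case False
    then have empty: "{\<psi> \<in> Aut C c. Comp C \<sigma> f = Comp C f \<psi>} = {}" by blast
    show ?thesis unfolding empty using False \<mu> by auto
  qed
  then have "(\<Sum>f\<in>Hom C c d. \<Sum>\<psi>\<in>{\<psi> \<in> Aut C c. Comp C \<sigma> f = Comp C f \<psi>}. if \<psi> \<in> \<mu> then 1 else 0)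
      = (\<Sum>f\<in>Hom C c d. if \<exists>\<psi> \<in> \<mu>. Comp C \<sigma> f = Comp C f \<psi> then 1 else 0)"
    by (rule sum.cong[OF refl])
  also have "\<dots> = card {f \<in> Hom C c d. \<exists>\<psi> \<in> \<mu>. Comp C \<sigma> f = Comp C f \<psi>}"
    by (simp add: sum.inter_filter[symmetric] finite_Hom)
  finally show ?thesis ..
qed

lemma sum_binomX:
  assumes \<mu>: "is_conj_class C c \<mu>" and "Hom C c d \<noteq> {}"
  shows "card (Aut C c) * (\<Sum>\<sigma>\<in>Aut C d. binomX C c \<mu> d \<sigma>) = card (Aut C d) * card \<mu>"
proof -
  have \<mu>_Aut: "\<mu> \<subseteq> Aut C c" using conj_class_subset[OF \<mu>] unfolding Aut_eq_Hom .
  have "card (Aut C c) * (\<Sum>\<sigma>\<in>Aut C d. binomX C c \<mu> d \<sigma>)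
      = (\<Sum>\<sigma>\<in>Aut C d. \<Sum>f\<in>Hom C c d. \<Sum>\<psi>\<in>{\<psi> \<in> Aut C c. Comp C \<sigma> f = Comp C f \<psi>}. if \<psi> \<in> \<mu> then 1 else 0)"
    unfolding sum_distrib_left card_twisted_fixed_eq_sum[OF \<mu>_Aut, symmetric]
    using card_Aut_mult_binomX[OF \<mu>] by simp
  also have "\<dots> = card (Aut C d) * (\<Sum>\<psi>\<in>Aut C c. if \<psi> \<in> \<mu> then 1 else 0)"
    unfolding sum_twisted_fixed_points[OF assms(2)] by simp
  also have "(\<Sum>\<psi>\<in>Aut C c. if \<psi> \<in> \<mu> then 1 else 0) = card {\<psi> \<in> Aut C c. \<psi> \<in> \<mu>}"
    by (simp add: sum.inter_filter[symmetric] finite_Aut)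
  also have "{\<psi> \<in> Aut C c. \<psi> \<in> \<mu>} = \<mu>"
    using \<mu>_Aut by blast
  finally show ?thesis .
qed

lemma expect_binomX:
  assumes \<mu>: "is_conj_class C c \<mu>" and d: "d \<in> Obj C" and "obj_le C c d"
  shows "expect C (\<lambda>d \<sigma>. of_nat (binomX C c \<mu> d \<sigma>)) d = of_nat (card \<mu>) / of_nat (card (Aut C c))"
proof -
  have c: "c \<in> Obj C" using \<mu> unfolding is_conj_class_def by blast
  have "of_nat (card (Aut C c) * (\<Sum>\<sigma>\<in>Aut C d. binomX C c \<mu> d \<sigma>)) = (of_nat (card (Aut C d) * card \<mu>) :: complex)"
    using sum_binomX[OF \<mu>] \<open>obj_le C c d\<close> unfolding obj_le_def by simp
  then show ?thesis
    using card_Aut_pos[OF c] card_Aut_pos[OF d] unfolding expect_def by (simp add: field_simps)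
qed

lemma charpoly_deg_le_trans: "charpoly_deg_le C M a c \<Longrightarrow> obj_le C c d \<Longrightarrow> charpoly_deg_le C M a d"
  unfolding charpoly_deg_le_def using obj_le_trans by blast

lemma expect_charpoly:
  assumes M: "charpoly_data C M" and d: "d \<in> Obj C" and deg: "charpoly_deg_le C M a d"
  shows "expect C (charpoly C M a) d = (\<Sum>(c, \<mu>)\<in>M. a (c, \<mu>) * of_nat (card \<mu>) / of_nat (card (Aut C c)))"
proof -
  have "expect C (charpoly C M a) d
      = (\<Sum>(c, \<mu>)\<in>M. a (c, \<mu>) * expect C (\<lambda>d \<sigma>. of_nat (binomX C c \<mu> d \<sigma>)) d)"
    unfolding expect_def charpoly_def
    by (subst sum.swap) (simp add: sum_divide_distrib sum_distrib_left split_def)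
  also have "\<dots> = (\<Sum>(c, \<mu>)\<in>M. a (c, \<mu>) * of_nat (card \<mu>) / of_nat (card (Aut C c)))"
  proof (rule sum.cong[OF refl], clarify)
    fix c \<mu> assume "(c, \<mu>) \<in> M"
    then show "a (c, \<mu>) * expect C (\<lambda>d \<sigma>. of_nat (binomX C c \<mu> d \<sigma>)) d
        = a (c, \<mu>) * of_nat (card \<mu>) / of_nat (card (Aut C c))"
      using M deg expect_binomX[OF _ d] unfolding charpoly_data_def charpoly_deg_le_def by fastforce
  qed
  finally show ?thesis .
qed

subsection \<open>Free modules\<close>

lemma average_character_nat:
  assumes \<rho>: "is_rep C c n \<rho>"
  shows "\<exists>k::nat. (\<Sum>\<psi>\<in>Aut C c. mat_trace (\<rho> \<psi>)) / of_nat (card (Aut C c)) = of_nat k"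
proof (rule average_trace_nat[where mult = "Comp C"])
  show "finite (Aut C c)" by (rule finite_Aut)
  show "Aut C c \<noteq> {}" using \<rho> card_Aut_pos unfolding is_rep_def by fastforce
  show "bij_betw (Comp C g) (Aut C c) (Aut C c)" if "g \<in> Aut C c" for g
    using bij_betw_Comp_Aut[OF that] unfolding Aut_eq_Hom .
qed (use \<rho> in \<open>auto simp: is_rep_def\<close>)

lemma expect_ind_char:
  assumes \<rho>: "is_rep C c n \<rho>" and d: "d \<in> Obj C"
  shows "expect C (ind_char C c \<rho>) d
       = (if obj_le C c d then (\<Sum>\<psi>\<in>Aut C c. mat_trace (\<rho> \<psi>)) / of_nat (card (Aut C c)) else 0)"
proof (cases "obj_le C c d")
  case True
  have "expect C (ind_char C c \<rho>) d
      = (\<Sum>\<sigma>\<in>Aut C d. \<Sum>f\<in>Hom C c d. \<Sum>\<psi>\<in>{\<psi> \<in> Aut C c. Comp C \<sigma> f = Comp C f \<psi>}. mat_trace (\<rho> \<psi>))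
        / of_nat (card (Aut C c)) / of_nat (card (Aut C d))"
    unfolding expect_def ind_char_def by (simp add: sum_divide_distrib)
  also have "\<dots> = of_nat (card (Aut C d)) * (\<Sum>\<psi>\<in>Aut C c. mat_trace (\<rho> \<psi>))
        / of_nat (card (Aut C c)) / of_nat (card (Aut C d))"
    by (simp only: sum_twisted_fixed_points[OF True[unfolded obj_le_def]])
  finally show ?thesis
    using True card_Aut_pos[OF d] by simp
next
  case False
  then show ?thesis
    unfolding expect_def ind_char_def obj_le_def by simp
qed

lemma expect_free_char: "expect C (free_char C F) d = (\<Sum>(c, n, \<rho>)\<leftarrow>F. expect C (ind_char C c \<rho>) d)"
  by (induction F) (simp_all add: free_char_def expect_def sum.distrib add_divide_distrib split_def)

lemma expect_free_char_of_nat: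
  assumes "free_module_data C F"
  obtains k :: "'o \<times> nat \<times> ('m \<Rightarrow> complex mat) \<Rightarrow> nat"
  where "\<And>d. d \<in> Obj C \<Longrightarrow>
    expect C (free_char C F) d = of_nat (\<Sum>x\<leftarrow>F. if obj_le C (fst x) d then k x else 0)"
proof -
  have "\<forall>x \<in> set F. \<exists>k::nat.
      (\<Sum>\<psi>\<in>Aut C (fst x). mat_trace (snd (snd x) \<psi>)) / of_nat (card (Aut C (fst x))) = of_nat k"
    using assms average_character_nat unfolding free_module_data_def by fastforce
  then obtain k where k: "\<And>x. x \<in> set F \<Longrightarrow>
      (\<Sum>\<psi>\<in>Aut C (fst x). mat_trace (snd (snd x) \<psi>)) / of_nat (card (Aut C (fst x))) = of_nat (k x)"
    by metis
  have "expect C (free_char C F) d = of_nat (\<Sum>x\<leftarrow>F. if obj_le C (fst x) d then k x else 0)"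
    if d: "d \<in> Obj C" for d
  proof -
    have "expect C (free_char C F) d = (\<Sum>x\<leftarrow>F. of_nat (if obj_le C (fst x) d then k x else 0))"
      unfolding expect_free_char
    proof (rule arg_cong[where f = sum_list], rule map_cong[OF refl], clarify)
      fix c n \<rho> assume x: "(c, n, \<rho>) \<in> set F"
      then have "is_rep C c n \<rho>" using assms unfolding free_module_data_def by blast
      then show "expect C (ind_char C c \<rho>) d = of_nat (if obj_le C (fst (c, n, \<rho>)) d then k (c, n, \<rho>) else 0)"
        using expect_ind_char[OF _ d] k[OF x] by simp
    qed
    then show ?thesis by (simp add: sum_list_of_nat[symmetric] comp_def)
  qed
  then show thesis by (rule that)
qed

lemma expect_free_char_nat:
  assumes "free_module_data C F" and "d \<in> Obj C"
  shows "\<exists>k::nat. expect C (free_char C F) d = of_nat k"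
  using expect_free_char_of_nat[OF assms(1)] assms(2) by metis

lemma expect_free_char_mono:
  assumes "free_module_data C F" and "d \<in> Obj C" "e \<in> Obj C" "obj_le C d e"
  shows "Re (expect C (free_char C F) d) \<le> Re (expect C (free_char C F) e)"
proof -
  obtain k where k: "\<And>d. d \<in> Obj C \<Longrightarrow>
      expect C (free_char C F) d = of_nat (\<Sum>x\<leftarrow>F. if obj_le C (fst x) d then k x else 0)"
    using expect_free_char_of_nat[OF assms(1)] by blast
  have "(\<Sum>x\<leftarrow>F. if obj_le C (fst x) d then k x else 0)
      \<le> (\<Sum>x\<leftarrow>F. if obj_le C (fst x) e then k x else 0)"
    using obj_le_trans[OF _ \<open>obj_le C d e\<close>] by (intro sum_list_mono) auto
  then show ?thesis
    using k assms(2,3) by simp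
qed

end

theorem mainTheorem13:
  fixes C :: "('o, 'm) cat"
  assumes "FI_type C"
  shows "(\<forall>M a c. charpoly_data C M \<and> c \<in> Obj C \<and> charpoly_deg_le C M a c \<longrightarrow>
            (\<forall>d \<in> Obj C. \<forall>e \<in> Obj C. obj_le C c d \<and> obj_le C c e \<longrightarrow>
               expect C (charpoly C M a) d = expect C (charpoly C M a) e))
       \<and> (\<forall>F. free_module_data C F \<longrightarrow>
            (\<forall>d \<in> Obj C. \<exists>k::nat. expect C (free_char C F) d = of_nat k) \<and>
            (\<forall>d \<in> Obj C. \<forall>e \<in> Obj C. obj_le C d e \<longrightarrow>
               Re (expect C (free_char C F) d) \<le> Re (expect C (free_char C F) e)))"
proof -
  interpret FI_category C by (rule FI_category.intro) (fact assms)
  show ?thesis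
  proof (intro conjI allI impI ballI)
    fix M a c d e
    assume "charpoly_data C M \<and> c \<in> Obj C \<and> charpoly_deg_le C M a c"
      and d: "d \<in> Obj C" and e: "e \<in> Obj C" and "obj_le C c d \<and> obj_le C c e"
    then have "charpoly_data C M" "charpoly_deg_le C M a d" "charpoly_deg_le C M a e"
      using charpoly_deg_le_trans by blast+
    then show "expect C (charpoly C M a) d = expect C (charpoly C M a) e"
      using expect_charpoly[OF _ d] expect_charpoly[OF _ e] by simp
  qed (simp_all add: expect_free_char_nat expect_free_char_mono)
qed

end
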